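(* Let $n\geq1$, let $a_1,\dots,a_{n-1}\in\mathbb{R}$ and $\alpha\in\mathbb{C}$, and let $$O_\alpha(z)=z^n\,\frac{\alpha+a_{n-1}z+\dots+a_1 z^{n-1}+z^n}{1+a_1 z+\dots+a_{n-1}z^{n-1}+\alpha z^n},$$ where $\alpha\neq0$ and $1+a_1+\dots+a_{n-1}+\alpha\neq0$, so that $z=1$ is a fixed point of $O_\alpha$. Let $$A=2n+2\sum_{j=1}^{n-1}(n-j)a_j,\qquad A'=1+\sum_{j=1}^{n-1}a_j,$$ with $A'\neq0$. Then: (i) $z=1$ is attracting if $|\alpha+A'|>|A|$; (ii) $z=1$ is indifferent if $|\alpha+A'|=|A|$; (iii) $z=1$ is repelling if $|\alpha+A'|<|A|$. Moreover, if $A=0$, the fixed point $z=1$ is superattracting.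
   Context: For a fixed point $z_0$ of a rational map $R$ with multiplier $\lambda=R'(z_0)$, $z_0$ is attracting if $|\lambda|<1$, superattracting if $\lambda=0$, repelling if $|\lambda|>1$, and indifferent if $|\lambda|=1$. *)

theory Defs
  imports "HOL-Analysis.Analysis"
begin

definition O_map :: "nat \<Rightarrow> (nat \<Rightarrow> real) \<Rightarrow> complex \<Rightarrow> complex \<Rightarrow> complex" where
  "O_map n a \<alpha> z =
     z ^ n * ((\<alpha> + (\<Sum>j=1..n-1. of_real (a j) * z ^ (n - j)) + z ^ n) /
              (1 + (\<Sum>j=1..n-1. of_real (a j) * z ^ j) + \<alpha> * z ^ n))"

definition multiplier :: "(complex \<Rightarrow> complex) \<Rightarrow> complex \<Rightarrow> complex" where
  "multiplier R z0 = deriv R z0"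

definition attracting_fp :: "(complex \<Rightarrow> complex) \<Rightarrow> complex \<Rightarrow> bool" where
  "attracting_fp R z0 \<longleftrightarrow> R z0 = z0 \<and> norm (multiplier R z0) < 1"

definition superattracting_fp :: "(complex \<Rightarrow> complex) \<Rightarrow> complex \<Rightarrow> bool" where
  "superattracting_fp R z0 \<longleftrightarrow> R z0 = z0 \<and> multiplier R z0 = 0"

definition repelling_fp :: "(complex \<Rightarrow> complex) \<Rightarrow> complex \<Rightarrow> bool" where
  "repelling_fp R z0 \<longleftrightarrow> R z0 = z0 \<and> norm (multiplier R z0) > 1"

definition indifferent_fp :: "(complex \<Rightarrow> complex) \<Rightarrow> complex \<Rightarrow> bool" where
  "indifferent_fp R z0 \<longleftrightarrow> R z0 = z0 \<and> norm (multiplier R z0) = 1"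

end

theory Submission
  imports Defs
begin

text \<open>Write O_alpha(z) = z^n p(z)/q(z) with p(1) = q(1) = S := alpha + A'. Since q is the reversal
  of p, one gets q'(1) = n S - p'(1), so the multiplier at 1 is n + (p'(1) - q'(1))/S = 2 p'(1)/S,
  and 2 p'(1) = A. Hence |O_alpha'(1)| = |A| / |alpha + A'|.\<close>

lemma has_field_derivative_power_mult_quotient_at_ratio_1:
  fixes p q :: "complex \<Rightarrow> complex"
  assumes "(p has_field_derivative p') (at z0)" and "(q has_field_derivative q') (at z0)"
    and "p z0 = q z0" and "q z0 \<noteq> 0"
  shows "((\<lambda>z. z ^ n * (p z / q z)) has_field_derivative
           of_nat n * z0 ^ (n - 1) + z0 ^ n * (p' - q') / q z0) (at z0)"
proof -
  have "((\<lambda>z. z ^ n * (p z / q z)) has_field_derivative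
          of_nat n * (1 * z0 ^ (n - Suc 0)) * (p z0 / q z0)
            + (p' * q z0 - p z0 * q') / (q z0 * q z0) * z0 ^ n) (at z0)"
    by (rule DERIV_mult[OF DERIV_power[OF DERIV_ident] DERIV_divide[OF assms(1,2,4)]])
  then show ?thesis
    by (rule DERIV_cong) (use assms(3,4) in \<open>simp add: field_simps power2_eq_square\<close>)
qed

lemma attracting_fp_iff_multiplier_quotient:
  assumes "R z0 = z0" and "multiplier R z0 = w / s" and "s \<noteq> 0"
  shows "attracting_fp R z0 \<longleftrightarrow> norm w < norm s"
  using assms by (simp add: attracting_fp_def norm_divide divide_less_eq)

lemma indifferent_fp_iff_multiplier_quotient:
  assumes "R z0 = z0" and "multiplier R z0 = w / s" and "s \<noteq> 0"
  shows "indifferent_fp R z0 \<longleftrightarrow> norm w = norm s"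
  using assms by (auto simp: indifferent_fp_def norm_divide)

lemma repelling_fp_iff_multiplier_quotient:
  assumes "R z0 = z0" and "multiplier R z0 = w / s" and "s \<noteq> 0"
  shows "repelling_fp R z0 \<longleftrightarrow> norm s < norm w"
  using assms by (simp add: repelling_fp_def norm_divide less_divide_eq)

lemma superattracting_fp_iff_multiplier_quotient:
  assumes "R z0 = z0" and "multiplier R z0 = w / s" and "s \<noteq> 0"
  shows "superattracting_fp R z0 \<longleftrightarrow> w = 0"
  using assms by (simp add: superattracting_fp_def)

definition O_num :: "nat \<Rightarrow> (nat \<Rightarrow> real) \<Rightarrow> complex \<Rightarrow> complex \<Rightarrow> complex" where
  "O_num n a \<alpha> z = \<alpha> + (\<Sum>j=1..n-1. of_real (a j) * z ^ (n - j)) + z ^ n"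

definition O_den :: "nat \<Rightarrow> (nat \<Rightarrow> real) \<Rightarrow> complex \<Rightarrow> complex \<Rightarrow> complex" where
  "O_den n a \<alpha> z = 1 + (\<Sum>j=1..n-1. of_real (a j) * z ^ j) + \<alpha> * z ^ n"

lemma O_map_eq_power_mult_quotient: "O_map n a \<alpha> = (\<lambda>z. z ^ n * (O_num n a \<alpha> z / O_den n a \<alpha> z))"
  unfolding O_map_def O_num_def O_den_def by simp

lemma O_num_at_1: "O_num n a \<alpha> 1 = \<alpha> + of_real (1 + (\<Sum>j=1..n-1. a j))"
  unfolding O_num_def by simp

lemma O_den_at_1: "O_den n a \<alpha> 1 = \<alpha> + of_real (1 + (\<Sum>j=1..n-1. a j))"
  unfolding O_den_def by simp

lemma O_num_has_field_derivative_at_1: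
  "(O_num n a \<alpha> has_field_derivative
      of_nat n + (\<Sum>j=1..n-1. of_real (a j) * of_nat (n - j))) (at 1)"
  unfolding O_num_def by (rule derivative_eq_intros refl | simp add: mult.commute)+

lemma O_den_has_field_derivative_at_1:
  "(O_den n a \<alpha> has_field_derivative
      \<alpha> * of_nat n + (\<Sum>j=1..n-1. of_real (a j) * of_nat j)) (at 1)"
  unfolding O_den_def by (rule derivative_eq_intros refl | simp add: mult.commute)+

lemma O_den_derivative_at_1_reversal:
  "\<alpha> * of_nat n + (\<Sum>j=1..n-1. of_real (a j) * of_nat j)
     = of_nat n * O_num n a \<alpha> 1 - (of_nat n + (\<Sum>j=1..n-1. of_real (a j) * of_nat (n - j)))"
proof -
  have "(\<Sum>j=1..n-1. of_real (a j) * (of_nat (n - j) :: complex))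
      = (\<Sum>j=1..n-1. of_nat n * of_real (a j) - of_real (a j) * of_nat j)"
    by (rule sum.cong) (auto simp: of_nat_diff algebra_simps)
  then show ?thesis
    by (simp add: O_num_def sum_subtractf sum_distrib_left algebra_simps)
qed

lemma O_map_multiplier_at_1:
  assumes "O_num n a \<alpha> 1 \<noteq> 0"
  shows "multiplier (O_map n a \<alpha>) 1
           = of_real (2 * real n + 2 * (\<Sum>j=1..n-1. real (n - j) * a j)) / O_num n a \<alpha> 1"
proof -
  let ?p' = "of_nat n + (\<Sum>j=1..n-1. of_real (a j) * of_nat (n - j)) :: complex"
  let ?q' = "\<alpha> * of_nat n + (\<Sum>j=1..n-1. of_real (a j) * of_nat j)"
  have "(O_map n a \<alpha> has_field_derivative of_nat n + (?p' - ?q') / O_den n a \<alpha> 1) (at 1)"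
    using has_field_derivative_power_mult_quotient_at_ratio_1
        [OF O_num_has_field_derivative_at_1 O_den_has_field_derivative_at_1, of n a \<alpha> n] assms
    unfolding O_map_eq_power_mult_quotient by (simp add: O_num_at_1 O_den_at_1)
  moreover have "of_nat n + (?p' - ?q') / O_den n a \<alpha> 1 = 2 * ?p' / O_num n a \<alpha> 1"
    using assms unfolding O_den_derivative_at_1_reversal
    by (simp add: O_num_at_1 O_den_at_1 field_simps)
  ultimately show ?thesis
    unfolding multiplier_def by (simp add: DERIV_imp_deriv mult.commute)
qed

theorem proposition4p2:
  fixes n :: nat and a :: "nat \<Rightarrow> real" and \<alpha> :: complex and A A' :: real
  assumes "n \<ge> 1"
    and "\<alpha> \<noteq> 0"
    and "1 + (\<Sum>j=1..n-1. complex_of_real (a j)) + \<alpha> \<noteq> 0"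
    and "A = 2 * real n + 2 * (\<Sum>j=1..n-1. real (n - j) * a j)"
    and "A' = 1 + (\<Sum>j=1..n-1. a j)"
    and "A' \<noteq> 0"
  shows "(norm (\<alpha> + complex_of_real A') > \<bar>A\<bar> \<longrightarrow> attracting_fp (O_map n a \<alpha>) 1)
       \<and> (norm (\<alpha> + complex_of_real A') = \<bar>A\<bar> \<longrightarrow> indifferent_fp (O_map n a \<alpha>) 1)
       \<and> (norm (\<alpha> + complex_of_real A') < \<bar>A\<bar> \<longrightarrow> repelling_fp (O_map n a \<alpha>) 1)
       \<and> (A = 0 \<longrightarrow> superattracting_fp (O_map n a \<alpha>) 1)"
proof -
  have num: "O_num n a \<alpha> 1 = \<alpha> + complex_of_real A'"
    using assms(5) by (simp add: O_num_at_1)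
  have nonzero: "\<alpha> + complex_of_real A' \<noteq> 0"
    using assms(3,5) by (simp add: algebra_simps)
  have fixed: "O_map n a \<alpha> 1 = 1"
    using nonzero num by (simp add: O_map_eq_power_mult_quotient O_den_at_1 O_num_at_1)
  have mult: "multiplier (O_map n a \<alpha>) 1 = complex_of_real A / (\<alpha> + complex_of_real A')"
    using O_map_multiplier_at_1[of n a \<alpha>] nonzero num assms(4) by simp
  show ?thesis
    using attracting_fp_iff_multiplier_quotient[OF fixed mult nonzero]
      indifferent_fp_iff_multiplier_quotient[OF fixed mult nonzero]
      repelling_fp_iff_multiplier_quotient[OF fixed mult nonzero]
      superattracting_fp_iff_multiplier_quotient[OF fixed mult nonzero]
    by auto
qed

end
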